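(* Let $X_1, X_2, \ldots$ be i.i.d.\ with $\mathbb{P}\{X_1 = 2^k\} = 2^{-k}$, $k \in \mathbb{N}$. For $n \geq 1$ let $X_{1n} \geq \cdots \geq X_{nn}$ be the decreasing rearrangement of $X_1,\ldots,X_n$, $S_{n,r} = \sum_{k=r+1}^n X_{kn}$, and $\gamma_n = n/2^{\lceil \log_2 n\rceil}$. Fix an integer $r \geq 0$. There is a finite constant $C > 0$ such that for any $\delta \in (0,1)$, $x \geq e$ and $n \geq 1$, \[ \mathbb{P}\left\{ \frac{S_{n,r}}{n} - a^{(r)}_{n,\gamma_n} > x\right\} \leq \frac{2^{r+1}}{(r+1)!}\left[(1-\delta)x\right]^{-(r+1)} + C\, \delta^{-(r+3/2)} x^{-(r+3/2)}, \] where $a^{(r)}_{n,\gamma} = \sum_{j=r+1}^n \frac{\Psi(j/\gamma)}{j}$.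
   Context: $\Psi(x) = 2^{\{\log_2 x\}}$ for $x>0$, where $\{y\}$ is the fractional part of $y$. *)

theory Defs
  imports "HOL-Probability.Probability"
begin

definition Psi :: "real \<Rightarrow> real" where
  "Psi x = 2 powr frac (log 2 x)"

definition gamma_n :: "nat \<Rightarrow> real" where
  "gamma_n n = real n / 2 powr real_of_int (ceiling (log 2 (real n)))"

definition a_const :: "nat \<Rightarrow> nat \<Rightarrow> real \<Rightarrow> real" where
  "a_const r n g = (\<Sum>j = r+1..n. Psi (real j / g) / real j)"

definition dec_rearr :: "(nat \<Rightarrow> 'a \<Rightarrow> real) \<Rightarrow> nat \<Rightarrow> 'a \<Rightarrow> real list" where
  "dec_rearr X n \<omega> = rev (sort (map (\<lambda>i. X i \<omega>) [1..<n+1]))"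

definition trimmed_sum :: "(nat \<Rightarrow> 'a \<Rightarrow> real) \<Rightarrow> nat \<Rightarrow> nat \<Rightarrow> 'a \<Rightarrow> real" where
  "trimmed_sum X n r \<omega> = (\<Sum>k = r+1..n. dec_rearr X n \<omega> ! (k - 1))"

end

theory Submission
  imports Defs
begin

text \<open>
  Put \<open>y = \<delta> x\<close>, \<open>m = 4r + 8\<close> and cut the sample at the levels \<open>T\<^sub>1 = (1 - \<delta>) x n\<close> and
  \<open>T\<^sub>2 = y n / m\<close>. Since \<open>P(X\<^sub>1 > t) \<le> 2/t\<close>, a union bound over index sets shows that \<open>r + 1\<close> of
  the \<open>X\<^sub>i\<close> exceed \<open>T\<^sub>1\<close> with probability at most \<open>(2n/T\<^sub>1)\<^sup>r\<^sup>+\<^sup>1/(r+1)!\<close>, which is the main term,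
  and that \<open>r + 2\<close> of them exceed \<open>T\<^sub>2\<close> with probability \<open>O(y\<^sup>-\<^sup>(\<^sup>r\<^sup>+\<^sup>2\<^sup>))\<close>. Outside these events the
  trimmed sum is at most \<open>T\<^sub>1\<close> plus the sum of the \<open>X\<^sub>i\<close> truncated at \<open>T\<^sub>2\<close>. A truncated variable
  has mean at most \<open>log\<^sub>2 T\<^sub>2\<close> and second moment at most \<open>2 T\<^sub>2\<close>, while the centring constant is at
  least \<open>log\<^sub>2 n - log\<^sub>2 (r + 1) - 2\<close>; so a Chernoff bound with parameter \<open>ln y / (2 T\<^sub>2)\<close> shows
  that the truncated sum exceeds \<open>n (a + y)\<close> with probability at most \<open>e\<^sup>4\<^sup>m y\<^sup>-\<^sup>m\<^sup>/\<^sup>4\<close>, and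
  \<open>m/4 = r + 2\<close>. The argument gives the exponent \<open>r + 2\<close> in place of \<open>r + 3/2\<close>.
\<close>

lemma exp_le_one_plus_quadratic:
  fixes u :: real
  assumes "0 \<le> u"
  shows "exp u \<le> 1 + u + u\<^sup>2 / 2 * exp u"
proof -
  obtain t where t: "\<bar>t\<bar> \<le> \<bar>u\<bar>" "exp u = (\<Sum>m<2. u ^ m / fact m) + exp t / fact 2 * u\<^sup>2"
    using Maclaurin_exp_le[of u 2] by blast
  have "exp t * u\<^sup>2 / 2 \<le> u\<^sup>2 / 2 * exp u"
    using t(1) assms by (simp add: mult_right_mono mult.commute)
  moreover have "exp u = 1 + u + exp t * u\<^sup>2 / 2"
    using t(2) by (simp add: eval_nat_numeral)
  ultimately show ?thesis by linarith
qed

lemma binomial_mult_power_le: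
  fixes c :: real
  assumes "0 \<le> c"
  shows "real (n choose k) * c ^ k \<le> (real n * c) ^ k / fact k"
proof -
  have "real (n choose k) * fact k \<le> real n ^ k"
    using binomial_fact_pow[of n k] by (metis of_nat_fact of_nat_le_iff of_nat_mult of_nat_power)
  then have "real (n choose k) \<le> real n ^ k / fact k"
    by (simp add: field_simps)
  then have "real (n choose k) * c ^ k \<le> real n ^ k / fact k * c ^ k"
    using assms by (intro mult_right_mono) auto
  then show ?thesis
    by (simp add: power_mult_distrib)
qed

lemma divide_power_eq_mult_powr:
  fixes z c :: real
  assumes "0 < z"
  shows "(c / z) ^ k = c ^ k * z powr - real k"
proof -
  have "(c / z) ^ k = c ^ k / z ^ k"
    by (rule power_divide)
  also have "\<dots> = c ^ k * z powr - real k"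
    using assms by (simp add: powr_minus powr_realpow divide_inverse)
  finally show ?thesis .
qed

lemma log2_add_2_le_half:
  fixes y :: real
  assumes "100 \<le> y"
  shows "log 2 y + 2 \<le> y / 2"
proof -
  have "exp (1/2::real) \<le> 2"
    using exp_bound_lemma[of "1/2::real"] by simp
  then have ln2: "1/2 \<le> ln (2::real)"
    by (subst ln_ge_iff) auto
  have "log 2 y = ln y / ln 2"
    by (simp add: log_def)
  also have "\<dots> \<le> ln y / (1/2)"
    using ln2 assms by (intro divide_left_mono) auto
  also have "\<dots> \<le> 4 * sqrt y"
    using ln_powr_bound[of y "1/2"] assms by (simp add: powr_half_sqrt)
  finally have "log 2 y \<le> 4 * sqrt y" .
  moreover have "10 \<le> sqrt y"
    using real_sqrt_le_mono[OF assms] by simp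
  moreover have "10 * sqrt y \<le> sqrt y * sqrt y"
    using \<open>10 \<le> sqrt y\<close> assms by (intro mult_right_mono) auto
  moreover have "sqrt y * sqrt y = y"
    using assms by simp
  ultimately show ?thesis
    by linarith
qed

lemma powr_floor_log_bounds:
  fixes u :: real
  assumes "0 < u"
  shows "2 powr \<lfloor>log 2 u\<rfloor> \<le> u" "u < 2 * 2 powr \<lfloor>log 2 u\<rfloor>"
proof -
  have "2 powr \<lfloor>log 2 u\<rfloor> \<le> 2 powr (log 2 u)"
    by (intro powr_mono) auto
  then show "2 powr \<lfloor>log 2 u\<rfloor> \<le> u"
    using assms by simp
  have "u = 2 powr (log 2 u)"
    using assms by simp
  also have "\<dots> < 2 powr (\<lfloor>log 2 u\<rfloor> + 1)"
    using floor_correct[of "log 2 u"] by (intro powr_less_mono) auto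
  finally show "u < 2 * 2 powr \<lfloor>log 2 u\<rfloor>"
    by (simp add: powr_add)
qed

lemma power2_le_iff_le_nat_floor_log:
  fixes T :: real
  assumes "1 \<le> T"
  shows "2 ^ j \<le> T \<longleftrightarrow> j \<le> nat \<lfloor>log 2 T\<rfloor>"
proof -
  have "2 ^ j \<le> T \<longleftrightarrow> real j \<le> log 2 T"
    using assms by (subst le_log_iff) (auto simp: powr_realpow)
  also have "\<dots> \<longleftrightarrow> j \<le> nat \<lfloor>log 2 T\<rfloor>"
    using assms by (simp add: le_floor_iff le_nat_iff)
  finally show ?thesis .
qed

lemma le_add_powr_extend_to_small:
  fixes p F C L y a b :: real
  assumes "p \<le> 1" "0 \<le> F" "0 \<le> C" "1 \<le> L" "0 < y" "0 \<le> b" "b \<le> a"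
    and large: "L \<le> y \<Longrightarrow> p \<le> F + C * y powr - a"
  shows "p \<le> F + (C + L powr b) * y powr - b"
proof (cases "L \<le> y")
  case True
  then have "y powr - a \<le> y powr - b"
    using assms by (intro powr_mono) auto
  then have "C * y powr - a \<le> C * y powr - b"
    using assms by (intro mult_left_mono)
  moreover have "0 \<le> L powr b * y powr - b"
    by simp
  ultimately show ?thesis
    using large[OF True] unfolding distrib_right by linarith
next
  case False
  have "p \<le> L powr b * L powr - b"
    using assms by (simp add: powr_add[symmetric])
  also have "\<dots> \<le> L powr b * y powr - b"
    using False assms by (intro mult_left_mono powr_mono2') auto
  finally show ?thesis
    using assms by (simp add: distrib_right add_increasing)
qed

section \<open>A lower bound for the centring constants\<close>

text \<open>
  The piecewise linear interpolation of \<open>log\<^sub>2\<close> at the powers of two. Its slope on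
  \<open>[2\<^sup>m, 2\<^sup>m\<^sup>+\<^sup>1)\<close> is \<open>2\<^sup>-\<^sup>m = \<Psi>(u)/u\<close>, so the summands of \<open>a_const\<close> dominate its increments.
\<close>

definition log2_interp :: "real \<Rightarrow> real" where
  "log2_interp u = \<lfloor>log 2 u\<rfloor> - 1 + u / 2 powr \<lfloor>log 2 u\<rfloor>"

lemma log2_interp_bounds:
  assumes "0 < u"
  shows "log 2 u - 1 \<le> log2_interp u" "log2_interp u \<le> log 2 u + 1"
proof -
  define p where "p = 2 powr \<lfloor>log 2 u\<rfloor>"
  have "1 \<le> u / p" "u / p \<le> 2"
    using powr_floor_log_bounds[OF assms] by (auto simp: p_def field_simps)
  moreover have "log 2 u - 1 \<le> \<lfloor>log 2 u\<rfloor>" "\<lfloor>log 2 u\<rfloor> \<le> log 2 u"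
    using floor_correct[of "log 2 u"] by auto
  ultimately show "log 2 u - 1 \<le> log2_interp u" "log2_interp u \<le> log 2 u + 1"
    unfolding log2_interp_def p_def[symmetric] by linarith+
qed

text \<open>Concavity: the interpolation lies below the line through \<open>(2\<^sup>i, i)\<close> of slope \<open>2\<^sup>-\<^sup>i\<close>.\<close>

lemma log2_interp_le_line:
  fixes i :: int
  assumes "0 < u"
  shows "log2_interp u \<le> i - 1 + u / 2 powr i"
proof -
  define m where "m = \<lfloor>log 2 u\<rfloor>"
  define p where "p = 2 powr m"
  have p: "0 < p" "p \<le> u" "u < 2 * p"
    using powr_floor_log_bounds[OF assms] by (auto simp: p_def m_def)
  have lhs: "log2_interp u = m - 1 + u / p"
    by (simp add: log2_interp_def m_def p_def)
  show ?thesis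
  proof (cases "m \<le> i")
    case True
    define d where "d = nat (i - m)"
    have i_eq: "real_of_int i = m + real d"
      using True by (simp add: d_def)
    then have i: "real_of_int i = m + real d" "2 powr i = p * 2 ^ d"
      by (simp_all add: p_def powr_add powr_realpow)
    have "2 * (1 - 1 / 2 ^ d) \<le> real d"
    proof (cases "d \<ge> 2")
      case True
      have "2 * (1 - 1 / 2 ^ d) \<le> (2::real)"
        by simp
      also have "\<dots> \<le> real d"
        using True by simp
      finally show ?thesis .
    qed (auto simp: not_le less_2_cases_iff)
    moreover have "u / p - u / (p * 2 ^ d) = u / p * (1 - 1 / 2 ^ d)"
      using p by (simp add: field_simps)
    moreover have "u / p * (1 - 1 / 2 ^ d) \<le> 2 * (1 - 1 / 2 ^ d)"
      using p by (intro mult_right_mono) (auto simp: field_simps)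
    ultimately show ?thesis
      unfolding lhs i(2) of_int_diff using i(1) by linarith
  next
    case False
    define d where "d = nat (m - i)"
    have i_eq: "real_of_int i = m - real d"
      using False by (simp add: d_def)
    then have i: "real_of_int i = m - real d" "2 powr i = p / 2 ^ d"
      by (simp_all add: p_def powr_diff powr_realpow)
    have "real d \<le> 2 ^ d - 1"
      by (induction d) auto
    also have "\<dots> \<le> u / p * (2 ^ d - 1)"
      using p mult_right_mono[of 1 "u / p" "2 ^ d - 1"] by (simp add: field_simps)
    also have "\<dots> = u / (p / 2 ^ d) - u / p"
      using p by (simp add: field_simps)
    finally show ?thesis
      unfolding lhs i(2) of_int_diff using i(1) by linarith
  qed
qed

lemma Psi_div_eq:
  assumes "0 < j" "0 < g"
  shows "Psi (j / g) / j = 1 / g / 2 powr \<lfloor>log 2 (j / g)\<rfloor>"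
proof -
  have "Psi (j / g) = 2 powr (log 2 (j / g) - \<lfloor>log 2 (j / g)\<rfloor>)"
    by (simp add: Psi_def frac_def)
  also have "\<dots> = j / g / 2 powr \<lfloor>log 2 (j / g)\<rfloor>"
    using assms by (simp add: powr_diff)
  finally show ?thesis
    using assms by simp
qed

lemma a_const_lower_bound:
  assumes "1 \<le> n" "0 < g"
  shows "log 2 n - log 2 (real r + 1) - 2 \<le> a_const r n g"
proof (cases "n \<le> r")
  case True
  then have "log 2 n \<le> log 2 (real r + 1)"
    using assms by simp
  then show ?thesis
    using True by (simp add: a_const_def)
next
  case False
  let ?f = "\<lambda>j::nat. log2_interp (j / g)"
  have "?f (Suc n) - ?f (r + 1) = (\<Sum>j = r+1..n. ?f (Suc j) - ?f j)"
    using False by (intro sum_Suc_diff[symmetric]) auto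
  also have "\<dots> \<le> a_const r n g"
    unfolding a_const_def
  proof (rule sum_mono)
    fix j assume j: "j \<in> {r+1..n}"
    have "?f (Suc j) \<le> \<lfloor>log 2 (j / g)\<rfloor> - 1 + (Suc j / g) / 2 powr \<lfloor>log 2 (j / g)\<rfloor>"
      using assms by (intro log2_interp_le_line) auto
    moreover have "Suc j / g = j / g + 1 / g"
      by (simp add: add_divide_distrib)
    ultimately show "?f (Suc j) - ?f j \<le> Psi (j / g) / j"
      using j assms by (simp add: Psi_div_eq log2_interp_def add_divide_distrib)
  qed
  finally have "?f (Suc n) - ?f (r + 1) \<le> a_const r n g" .
  moreover have "log 2 (Suc n / g) - 1 \<le> ?f (Suc n)" "?f (r + 1) \<le> log 2 ((r + 1) / g) + 1"
    using assms by (intro log2_interp_bounds; simp)+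
  moreover have "log 2 (Suc n / g) = log 2 (Suc n) - log 2 g"
    "log 2 ((r + 1) / g) = log 2 (real r + 1) - log 2 g"
    using assms by (simp_all add: log_divide add.commute)
  moreover have "log 2 n \<le> log 2 (Suc n)"
    using assms by simp
  ultimately show ?thesis
    by linarith
qed

section \<open>Trimmed sums\<close>

definition truncate_at :: "real \<Rightarrow> real \<Rightarrow> real" where
  "truncate_at T z = (if 0 \<le> z \<and> z \<le> T then z else 0)"

lemma truncate_at_bounds: "0 \<le> T \<Longrightarrow> 0 \<le> truncate_at T z \<and> truncate_at T z \<le> T"
  by (simp add: truncate_at_def)

lemma borel_measurable_truncate_at [measurable]: "truncate_at T \<in> borel_measurable borel"
  unfolding truncate_at_def by measurable

lemma sorted_desc_nth_le:
  fixes ys :: "'a::linorder list"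
  assumes "sorted_wrt (\<ge>) ys" "j < length ys" "length (filter (\<lambda>y. t < y) ys) \<le> j"
  shows "ys ! j \<le> t"
proof (rule ccontr)
  assume "\<not> ys ! j \<le> t"
  have "\<forall>y\<in>set (take (j + 1) ys). t < y"
  proof
    fix y assume "y \<in> set (take (j + 1) ys)"
    then obtain i where "i \<le> j" "y = ys ! i"
      by (auto simp: in_set_conv_nth less_Suc_eq_le)
    moreover have "ys ! j \<le> ys ! i" if "i < j"
      using assms(1,2) that by (auto simp: sorted_wrt_iff_nth_less)
    ultimately show "t < y"
      using \<open>\<not> ys ! j \<le> t\<close> by (cases "i = j") auto
  qed
  then have "filter (\<lambda>y. t < y) (take (j + 1) ys) = take (j + 1) ys"
    by simp
  moreover have "length (filter (\<lambda>y. t < y) ys) =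
      length (filter (\<lambda>y. t < y) (take (j + 1) ys)) + length (filter (\<lambda>y. t < y) (drop (j + 1) ys))"
    by (metis append_take_drop_id filter_append length_append)
  ultimately show False
    using assms(2,3) by simp
qed

text \<open>The \<open>(r+1)\<close>-st largest entry is at most \<open>t\<^sub>1\<close>, and all smaller ones are at most \<open>t\<^sub>2\<close>.\<close>

lemma sum_list_drop_sorted_le:
  fixes xs :: "real list"
  assumes nonneg: "\<forall>z\<in>set xs. 0 \<le> z" and "0 \<le> t\<^sub>1"
    and few1: "length (filter (\<lambda>z. t\<^sub>1 < z) xs) \<le> r"
    and few2: "length (filter (\<lambda>z. t\<^sub>2 < z) xs) \<le> r + 1"
  shows "sum_list (drop r (rev (sort xs))) \<le> t\<^sub>1 + sum_list (map (truncate_at t\<^sub>2) xs)"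
proof -
  define ys where "ys = rev (sort xs)"
  have sorted: "sorted_wrt (\<ge>) ys"
    by (simp add: ys_def sorted_wrt_rev)
  have mset: "mset ys = mset xs"
    by (simp add: ys_def)
  then have count: "length (filter P ys) = length (filter P xs)" for P
    by (metis mset_filter size_mset)
  have nonneg_ys: "\<forall>z\<in>set ys. 0 \<le> z"
    using nonneg mset by (metis set_mset_mset)
  have trunc_sum: "sum_list (map (truncate_at t\<^sub>2) ys) = sum_list (map (truncate_at t\<^sub>2) xs)"
    by (metis mset mset_map sum_mset_sum_list)
  have trunc_nonneg: "0 \<le> sum_list (map (truncate_at t\<^sub>2) zs)" for zs
    by (induction zs) (auto simp: truncate_at_def)
  show ?thesis
  proof (cases "drop r ys")
    case Nil
    then show ?thesis
      using trunc_nonneg[of xs] \<open>0 \<le> t\<^sub>1\<close> by (simp add: ys_def)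
  next
    case (Cons w ws)
    have r: "r < length ys"
      using Cons by (metis drop_all list.distinct(1) not_le)
    have w: "w = ys ! r"
      using Cons r by (metis hd_drop_conv_nth list.sel(1))
    have ws: "ws = drop (Suc r) ys"
      using Cons by (metis drop_Suc list.sel(3) tl_drop)
    have "w \<le> t\<^sub>1"
      using sorted_desc_nth_le[OF sorted r] few1 count w by simp
    have "z \<le> t\<^sub>2 \<and> 0 \<le> z" if "z \<in> set ws" for z
    proof
      obtain q where "q < length ws" "z = ws ! q"
        using \<open>z \<in> set ws\<close> by (auto simp: in_set_conv_nth)
      then have q: "Suc r + q < length ys" "z = ys ! (Suc r + q)"
        using ws by auto
      show "0 \<le> z"
        using q nonneg_ys by (metis nth_mem)
      show "z \<le> t\<^sub>2"
        using sorted_desc_nth_le[OF sorted q(1)] few2 count q(2) by simp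
    qed
    then have "sum_list ws = sum_list (map (truncate_at t\<^sub>2) ws)"
      by (induction ws) (auto simp: truncate_at_def)
    also have "\<dots> \<le> sum_list (map (truncate_at t\<^sub>2) ys)"
      using trunc_nonneg[of "take r ys"] nonneg_ys Cons
      by (subst append_take_drop_id[of r ys, symmetric])
        (auto simp: truncate_at_def)
    finally show ?thesis
      using Cons \<open>w \<le> t\<^sub>1\<close> trunc_sum by (simp add: ys_def)
  qed
qed

lemma trimmed_sum_eq_sum_list:
  "trimmed_sum X n r \<omega> = sum_list (drop r (rev (sort (map (\<lambda>i. X i \<omega>) [1..<n+1]))))"
proof -
  let ?ys = "dec_rearr X n \<omega>"
  have len: "length ?ys = n"
    by (simp add: dec_rearr_def)
  have "sum_list (drop r ?ys) = (\<Sum>i = 0..<length (drop r ?ys). drop r ?ys ! i)"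
    by (rule sum_list_sum_nth)
  also have "\<dots> = (\<Sum>k = r+1..n. ?ys ! (k - 1))"
    by (rule sum.reindex_bij_witness[where i="\<lambda>k. k - 1 - r" and j="\<lambda>i. i + r + 1"])
      (use len in \<open>auto simp: add.commute\<close>)
  finally show ?thesis
    by (simp add: trimmed_sum_def dec_rearr_def)
qed

lemma trimmed_sum_le_truncated_sum:
  assumes "\<forall>i\<in>{1..n}. 0 \<le> X i \<omega>" "0 \<le> t\<^sub>1"
    and "card {i\<in>{1..n}. t\<^sub>1 < X i \<omega>} \<le> r" "card {i\<in>{1..n}. t\<^sub>2 < X i \<omega>} \<le> r + 1"
  shows "trimmed_sum X n r \<omega> \<le> t\<^sub>1 + (\<Sum>i = 1..n. truncate_at t\<^sub>2 (X i \<omega>))"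
proof -
  define xs where "xs = map (\<lambda>i. X i \<omega>) [1..<n+1]"
  have "length (filter P xs) = card {i\<in>{1..n}. P (X i \<omega>)}" for P
  proof -
    have "length (filter P xs) = card (set (filter (P \<circ> (\<lambda>i. X i \<omega>)) [1..<n+1]))"
      unfolding xs_def filter_map length_map by (rule distinct_card[symmetric]) simp
    also have "set (filter (P \<circ> (\<lambda>i. X i \<omega>)) [1..<n+1]) = {i\<in>{1..n}. P (X i \<omega>)}"
      by auto
    finally show ?thesis .
  qed
  moreover have "sum_list (map (truncate_at t\<^sub>2) xs) = (\<Sum>i = 1..n. truncate_at t\<^sub>2 (X i \<omega>))"
    unfolding xs_def map_map interv_sum_list_conv_sum_set_nat by (intro sum.cong) auto
  moreover have "\<forall>z\<in>set xs. 0 \<le> z"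
    using assms(1) by (auto simp: xs_def)
  ultimately show ?thesis
    using sum_list_drop_sorted_le[of xs t\<^sub>1 r t\<^sub>2] assms(2-4)
    unfolding trimmed_sum_eq_sum_list xs_def[symmetric] by simp
qed

section \<open>Union and Chernoff bounds for independent variables\<close>

lemma card_exceed_event_eq:
  assumes "finite I" "1 \<le> k"
  shows "{\<omega>\<in>\<Omega>. k \<le> card {i\<in>I. t < X i \<omega>}} =
    (\<Union>S\<in>{S. S \<subseteq> I \<and> card S = k}. \<Inter>i\<in>S. {\<omega>\<in>\<Omega>. t < X i \<omega>})"
proof safe
  fix \<omega> assume "\<omega> \<in> \<Omega>" "k \<le> card {i\<in>I. t < X i \<omega>}"
  then obtain S where "S \<subseteq> {i\<in>I. t < X i \<omega>}" "card S = k"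
    by (meson obtain_subset_with_card_n)
  then show "\<omega> \<in> (\<Union>S\<in>{S. S \<subseteq> I \<and> card S = k}. \<Inter>i\<in>S. {\<omega>\<in>\<Omega>. t < X i \<omega>})"
    using \<open>\<omega> \<in> \<Omega>\<close> by blast
next
  fix \<omega> S assume S: "S \<subseteq> I" "k = card S" and "\<omega> \<in> (\<Inter>i\<in>S. {\<omega>\<in>\<Omega>. t < X i \<omega>})"
  then have sub: "S \<subseteq> {i\<in>I. t < X i \<omega>}"
    by blast
  have "S \<noteq> {}"
    using S assms by auto
  then show "\<omega> \<in> \<Omega>"
    using \<open>\<omega> \<in> (\<Inter>i\<in>S. _)\<close> by blast
  show "card S \<le> card {i\<in>I. t < X i \<omega>}"
    using sub assms(1) by (intro card_mono) auto
qed

context prob_space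
begin

lemma prob_card_exceed_le:
  fixes X :: "'i \<Rightarrow> 'a \<Rightarrow> real"
  assumes indep: "indep_vars (\<lambda>_. borel) X J" and "I \<subseteq> J" "finite I" "1 \<le> k"
    and tail: "\<And>i. i \<in> I \<Longrightarrow> prob {\<omega>\<in>space M. t < X i \<omega>} \<le> p"
  shows "{\<omega>\<in>space M. k \<le> card {i\<in>I. t < X i \<omega>}} \<in> events"
    and "prob {\<omega>\<in>space M. k \<le> card {i\<in>I. t < X i \<omega>}} \<le> real (card I choose k) * p ^ k"
proof -
  let ?SS = "{S. S \<subseteq> I \<and> card S = k}"
  have "?SS \<subseteq> Pow I"
    by auto
  then have fin: "finite ?SS"
    using \<open>finite I\<close> by (simp add: finite_subset)
  have S: "finite S" "S \<noteq> {}" "S \<subseteq> J" if "S \<in> ?SS" for S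
  proof -
    show "finite S"
      using that \<open>finite I\<close> by (auto intro: finite_subset)
    show "S \<noteq> {}"
      using that \<open>1 \<le> k\<close> by auto
    show "S \<subseteq> J"
      using that \<open>I \<subseteq> J\<close> by auto
  qed
  have preimage: "{\<omega>\<in>space M. t < X i \<omega>} = X i -` {t<..} \<inter> space M" for i
    by auto
  have "X i \<in> borel_measurable M" if "i \<in> J" for i
    using indep that by (auto simp: indep_vars_def)
  then have ev: "(\<Inter>i\<in>S. {\<omega>\<in>space M. t < X i \<omega>}) \<in> events" if "S \<in> ?SS" for S
    using S[OF that] unfolding preimage by (intro sets.finite_INT measurable_sets) auto
  then show "{\<omega>\<in>space M. k \<le> card {i\<in>I. t < X i \<omega>}} \<in> events"
    unfolding card_exceed_event_eq[OF \<open>finite I\<close> \<open>1 \<le> k\<close>] using fin by blast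
  have "prob {\<omega>\<in>space M. k \<le> card {i\<in>I. t < X i \<omega>}}
      \<le> (\<Sum>S\<in>?SS. prob (\<Inter>i\<in>S. {\<omega>\<in>space M. t < X i \<omega>}))"
    unfolding card_exceed_event_eq[OF \<open>finite I\<close> \<open>1 \<le> k\<close>]
    using fin ev by (intro finite_measure_subadditive_finite) auto
  also have "\<dots> \<le> (\<Sum>S\<in>?SS. p ^ k)"
  proof (rule sum_mono)
    fix S assume "S \<in> ?SS"
    have "prob (\<Inter>i\<in>S. X i -` {t<..} \<inter> space M) = (\<Prod>i\<in>S. prob (X i -` {t<..} \<inter> space M))"
      by (rule indep_varsD[OF indep]) (use S[OF \<open>S \<in> ?SS\<close>] in simp_all)
    also have "\<dots> \<le> (\<Prod>i\<in>S. p)"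
      using tail \<open>S \<in> ?SS\<close> by (intro prod_mono) (auto simp: preimage[symmetric])
    finally show "prob (\<Inter>i\<in>S. {\<omega>\<in>space M. t < X i \<omega>}) \<le> p ^ k"
      using \<open>S \<in> ?SS\<close> by (simp add: preimage)
  qed
  also have "\<dots> = real (card I choose k) * p ^ k"
    using n_subsets[OF \<open>finite I\<close>, of k] by simp
  finally show "prob {\<omega>\<in>space M. k \<le> card {i\<in>I. t < X i \<omega>}} \<le> real (card I choose k) * p ^ k" .
qed

lemma expectation_exp_le:
  fixes Z :: "'a \<Rightarrow> real"
  assumes [measurable]: "Z \<in> borel_measurable M"
    and bounds: "\<And>\<omega>. \<omega> \<in> space M \<Longrightarrow> 0 \<le> Z \<omega> \<and> Z \<omega> \<le> T" and "0 \<le> l"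
  shows "expectation (\<lambda>\<omega>. exp (l * Z \<omega>))
    \<le> exp (l * expectation Z + l\<^sup>2 / 2 * exp (l * T) * expectation (\<lambda>\<omega>. Z \<omega> ^ 2))"
proof -
  define c where "c = l\<^sup>2 / 2 * exp (l * T)"
  have int_Z: "integrable M Z"
    using bounds by (intro integrable_const_bound[where B = T] AE_I2) auto
  have int_Z2: "integrable M (\<lambda>\<omega>. Z \<omega> ^ 2)"
    using bounds by (intro integrable_const_bound[where B = "T\<^sup>2"] AE_I2) (auto intro: power_mono)
  have int_exp: "integrable M (\<lambda>\<omega>. exp (l * Z \<omega>))"
    using bounds \<open>0 \<le> l\<close>
    by (intro integrable_const_bound[where B = "exp (l * T)"] AE_I2) (auto intro: mult_left_mono)
  have pointwise: "exp (l * Z \<omega>) \<le> 1 + l * Z \<omega> + c * Z \<omega> ^ 2" if "\<omega> \<in> space M" for \<omega>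
  proof -
    have "exp (l * Z \<omega>) \<le> 1 + l * Z \<omega> + (l * Z \<omega>)\<^sup>2 / 2 * exp (l * Z \<omega>)"
      using bounds[OF that] \<open>0 \<le> l\<close> by (intro exp_le_one_plus_quadratic) auto
    also have "\<dots> \<le> 1 + l * Z \<omega> + (l * Z \<omega>)\<^sup>2 / 2 * exp (l * T)"
      using bounds[OF that] \<open>0 \<le> l\<close> by (auto intro!: mult_left_mono)
    finally show ?thesis
      by (simp add: c_def power_mult_distrib mult_ac)
  qed
  have "expectation (\<lambda>\<omega>. exp (l * Z \<omega>)) \<le> expectation (\<lambda>\<omega>. 1 + l * Z \<omega> + c * Z \<omega> ^ 2)"
    using int_Z int_Z2 int_exp pointwise by (intro integral_mono) auto
  also have "\<dots> = 1 + (l * expectation Z + c * expectation (\<lambda>\<omega>. Z \<omega> ^ 2))"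
    using int_Z int_Z2 by (simp add: prob_space)
  also have "\<dots> \<le> exp (l * expectation Z + c * expectation (\<lambda>\<omega>. Z \<omega> ^ 2))"
    by (rule exp_ge_add_one_self)
  finally show ?thesis
    by (simp add: c_def)
qed

lemma prob_sum_ge_le_exp:
  fixes Z :: "'i \<Rightarrow> 'a \<Rightarrow> real"
  assumes indep: "indep_vars (\<lambda>_. borel) Z I" and "finite I" "0 \<le> l"
    and bounds: "\<And>i \<omega>. i \<in> I \<Longrightarrow> \<omega> \<in> space M \<Longrightarrow> 0 \<le> Z i \<omega> \<and> Z i \<omega> \<le> T"
    and mgf: "\<And>i. i \<in> I \<Longrightarrow> expectation (\<lambda>\<omega>. exp (l * Z i \<omega>)) \<le> exp c"
  shows "prob {\<omega>\<in>space M. s \<le> (\<Sum>i\<in>I. Z i \<omega>)} \<le> exp (- l * s + real (card I) * c)"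
proof -
  let ?S = "\<lambda>\<omega>. \<Sum>i\<in>I. Z i \<omega>"
  have meas: "Z i \<in> borel_measurable M" if "i \<in> I" for i
    using indep that by (auto simp: indep_vars_def)
  have int_exp: "integrable M (\<lambda>\<omega>. exp (l * Z i \<omega>))" if "i \<in> I" for i
    using bounds[OF that] meas[OF that] \<open>0 \<le> l\<close>
    by (intro integrable_const_bound[where B = "exp (l * T)"] AE_I2) (auto intro: mult_left_mono)
  have indep_exp: "indep_vars (\<lambda>_. borel) (\<lambda>i \<omega>. exp (l * Z i \<omega>)) I"
    by (rule indep_vars_compose2[OF indep]) auto
  have "{\<omega>\<in>space M. s \<le> ?S \<omega>} \<subseteq> {\<omega>\<in>space M. exp (l * s) \<le> exp (l * ?S \<omega>)}"
    using \<open>0 \<le> l\<close> by (auto intro: mult_left_mono)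
  then have "prob {\<omega>\<in>space M. s \<le> ?S \<omega>} \<le> prob {\<omega>\<in>space M. exp (l * s) \<le> exp (l * ?S \<omega>)}"
    using meas by (intro finite_measure_mono) auto
  also have "\<dots> \<le> expectation (\<lambda>\<omega>. exp (l * ?S \<omega>)) / exp (l * s)"
    using indep_vars_integrable[OF \<open>finite I\<close> indep_exp int_exp]
    unfolding sum_distrib_left exp_sum[OF \<open>finite I\<close>]
    by (intro integral_Markov_inequality_measure) (auto intro!: prod_nonneg)
  also have "expectation (\<lambda>\<omega>. exp (l * ?S \<omega>)) = (\<Prod>i\<in>I. expectation (\<lambda>\<omega>. exp (l * Z i \<omega>)))"
    unfolding sum_distrib_left exp_sum[OF \<open>finite I\<close>]
    by (rule indep_vars_lebesgue_integral[OF \<open>finite I\<close> indep_exp int_exp])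
  also have "\<dots> \<le> (\<Prod>i\<in>I. exp c)"
    using mgf by (intro prod_mono) auto
  also have "\<dots> = exp (real (card I) * c)"
    by (simp add: exp_of_nat_mult)
  finally have "prob {\<omega>\<in>space M. s \<le> ?S \<omega>} \<le> exp (real (card I) * c) / exp (l * s)"
    by (simp add: divide_right_mono)
  also have "\<dots> = exp (- l * s + real (card I) * c)"
    by (simp add: exp_diff[symmetric])
  finally show ?thesis .
qed

end

lemma chernoff_exponent_le:
  fixes y m n a T :: real
  assumes "100 \<le> y" "0 < m" "0 < n" "T = y * n / m"
    and cond: "log 2 T - a - y \<le> - y / 2"
  defines "l \<equiv> ln y / 2 / T"
  shows "- l * (n * (a + y)) + n * (l * log 2 T + l\<^sup>2 * T * exp (l * T)) \<le> - ln y * m / 4 + 4 * m"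
proof -
  define \<theta> where "\<theta> = ln y / 2"
  have "0 < y" "0 < T" "0 \<le> \<theta>"
    using assms by (auto simp: \<theta>_def)
  have "exp \<theta> = sqrt y"
    using \<open>0 < y\<close> by (simp add: \<theta>_def ln_sqrt[symmetric])
  have "\<theta> \<le> 2 * y powr (1/4)"
    using ln_powr_bound[of y "1/4"] assms by (simp add: \<theta>_def)
  then have "\<theta> * \<theta> \<le> (2 * y powr (1/4)) * (2 * y powr (1/4))"
    using \<open>0 \<le> \<theta>\<close> by (intro mult_mono) auto
  also have "\<dots> = 4 * sqrt y"
    using \<open>0 < y\<close> by (simp add: powr_add[symmetric] powr_half_sqrt)
  finally have "\<theta> * \<theta> \<le> 4 * sqrt y" .
  have "\<theta> * m / y * (\<theta> * exp \<theta>) = m * (\<theta> * \<theta>) / sqrt y"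
    using \<open>exp \<theta> = sqrt y\<close> \<open>0 < y\<close> by (simp add: field_simps)
  also have "\<dots> \<le> m * (4 * sqrt y) / sqrt y"
    using \<open>\<theta> * \<theta> \<le> 4 * sqrt y\<close> \<open>0 < m\<close> \<open>0 < y\<close> by (intro divide_right_mono mult_left_mono) auto
  also have "\<dots> = 4 * m"
    using \<open>0 < y\<close> by simp
  finally have "\<theta> * m / y * (\<theta> * exp \<theta>) \<le> 4 * m" .
  moreover have "\<theta> * m / y * (log 2 T - a - y) \<le> \<theta> * m / y * (- y / 2)"
    using cond \<open>0 \<le> \<theta>\<close> assms by (intro mult_left_mono) auto
  moreover have "- l * (n * (a + y)) + n * (l * log 2 T + l\<^sup>2 * T * exp (l * T))
      = \<theta> * m / y * (log 2 T - a - y) + \<theta> * m / y * (\<theta> * exp \<theta>)"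
  proof -
    have "l * T = \<theta>" "n * l = \<theta> * m / y"
      using \<open>0 < y\<close> \<open>0 < T\<close> assms by (simp_all add: l_def \<theta>_def)
    moreover have "- l * (n * (a + y)) + n * (l * log 2 T + l\<^sup>2 * T * exp (l * T))
        = n * l * (log 2 T - a - y) + n * l * (l * T * exp (l * T))"
      by (simp add: algebra_simps power2_eq_square)
    ultimately show ?thesis
      by simp
  qed
  moreover have "\<theta> * m / y * (- y / 2) = - ln y * m / 4"
    using \<open>0 < y\<close> by (simp add: \<theta>_def)
  ultimately show ?thesis
    by linarith
qed


section \<open>The St.~Petersburg distribution\<close>

locale st_petersburg = prob_space M for M :: "'a measure" +
  fixes X :: "nat \<Rightarrow> 'a \<Rightarrow> real"
  assumes X_measurable [measurable]: "\<And>i. X i \<in> borel_measurable M"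
    and X_indep: "indep_vars (\<lambda>_. borel) X UNIV"
    and X_distr: "\<And>i k. 1 \<le> k \<Longrightarrow> prob {\<omega>\<in>space M. X i \<omega> = 2 ^ k} = 1 / 2 ^ k"
begin

lemma prob_X_in_power2_range:
  "prob (\<Union>k\<in>{1..N}. {\<omega>\<in>space M. X i \<omega> = 2 ^ k}) = 1 - 1 / 2 ^ N"
proof -
  have "prob (\<Union>k\<in>{1..N}. {\<omega>\<in>space M. X i \<omega> = 2 ^ k}) =
      (\<Sum>k\<in>{1..N}. prob {\<omega>\<in>space M. X i \<omega> = 2 ^ k})"
    by (rule measure_finite_Union) (auto simp: disjoint_family_on_def)
  also have "\<dots> = (\<Sum>k\<in>{1..N}. 1 / 2 ^ k)"
    by (intro sum.cong) (auto simp: X_distr)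
  also have "\<dots> = 1 - 1 / 2 ^ N"
    by (induction N) (auto simp: field_simps)
  finally show ?thesis .
qed

lemma AE_X_power2: "AE \<omega> in M. \<exists>k\<ge>1. X i \<omega> = 2 ^ k"
proof -
  let ?E = "{\<omega>\<in>space M. \<exists>k\<ge>1. X i \<omega> = (2::real) ^ k}"
  have E: "?E = (\<Union>k\<in>{1..}. {\<omega>\<in>space M. X i \<omega> = 2 ^ k})"
    by auto
  have lower: "1 - (1/2) ^ N \<le> prob ?E" for N
  proof -
    have "prob (\<Union>k\<in>{1..N}. {\<omega>\<in>space M. X i \<omega> = 2 ^ k}) \<le> prob ?E"
      unfolding E by (rule finite_measure_mono) auto
    then show ?thesis
      using prob_X_in_power2_range[of i N] by (simp add: power_one_over)
  qed
  have "\<not> prob ?E < 1"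
  proof
    assume "prob ?E < 1"
    then obtain N where "(1/2) ^ N < 1 - prob ?E"
      using real_arch_pow_inv[of "1 - prob ?E" "1/2"] by auto
    then show False
      using lower[of N] by linarith
  qed
  then have "prob ?E = 1"
    using prob_le_1 by (meson antisym not_less)
  then have "AE \<omega> in M. \<omega> \<in> ?E"
    by (intro AE_prob_1)
  then show ?thesis
    by eventually_elim auto
qed

lemma AE_X_nonneg: "AE \<omega> in M. \<forall>i. 0 \<le> X i \<omega>"
  unfolding AE_all_countable
proof
  fix i
  show "AE \<omega> in M. 0 \<le> X i \<omega>"
    using AE_X_power2[of i] by eventually_elim auto
qed

lemma prob_X_greater_le:
  assumes "0 < t"
  shows "prob {\<omega>\<in>space M. t < X i \<omega>} \<le> 2 / t"
proof (cases "t < 1")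
  case True
  have "prob {\<omega>\<in>space M. t < X i \<omega>} \<le> 1"
    by simp
  also have "1 \<le> 2 / t"
    using True assms by (simp add: field_simps)
  finally show ?thesis .
next
  case False
  define N where "N = nat \<lfloor>log 2 t\<rfloor>"
  have "(2::real) ^ N = 2 powr real N"
    by (simp add: powr_realpow)
  also have "real N = \<lfloor>log 2 t\<rfloor>"
    using False by (simp add: N_def)
  finally have N: "2 ^ N \<le> t" "t < 2 * 2 ^ N"
    using powr_floor_log_bounds[OF assms] by simp_all
  have "{\<omega>\<in>space M. t < X i \<omega>} \<subseteq> space M - (\<Union>k\<in>{1..N}. {\<omega>\<in>space M. X i \<omega> = 2 ^ k})"
  proof safe
    fix \<omega> k assume "t < X i \<omega>" "k \<in> {1..N}" "X i \<omega> = 2 ^ k"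
    moreover have "(2::real) ^ k \<le> 2 ^ N"
      using \<open>k \<in> {1..N}\<close> by (intro power_increasing) auto
    ultimately show False
      using N(1) by simp
  qed
  then have "prob {\<omega>\<in>space M. t < X i \<omega>} \<le> prob (space M - (\<Union>k\<in>{1..N}. {\<omega>\<in>space M. X i \<omega> = 2 ^ k}))"
    by (intro finite_measure_mono) measurable
  also have "\<dots> = 1 / 2 ^ N"
    using prob_X_in_power2_range[of i N] by (subst prob_compl) auto
  also have "\<dots> \<le> 2 / t"
    using N(2) assms by (simp add: field_simps)
  finally show ?thesis .
qed

lemma prob_many_X_greater_le:
  fixes c :: real and n :: nat
  assumes "0 < c" "1 \<le> k" "1 \<le> n"
  shows "{\<omega>\<in>space M. k \<le> card {i\<in>{1..n}. c * n < X i \<omega>}} \<in> events"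
    and "prob {\<omega>\<in>space M. k \<le> card {i\<in>{1..n}. c * n < X i \<omega>}} \<le> (2 / c) ^ k / fact k"
proof -
  have "0 < c * n"
    using assms by simp
  note bound = prob_card_exceed_le[OF X_indep subset_UNIV finite_atLeastAtMost \<open>1 \<le> k\<close>
      prob_X_greater_le[OF this]]
  show "{\<omega>\<in>space M. k \<le> card {i\<in>{1..n}. c * n < X i \<omega>}} \<in> events"
    by (rule bound(1))
  have "prob {\<omega>\<in>space M. k \<le> card {i\<in>{1..n}. c * n < X i \<omega>}} \<le> real (n choose k) * (2 / (c * n)) ^ k"
    using bound(2)[of 1 n] by simp
  also have "\<dots> \<le> (n * (2 / (c * n))) ^ k / fact k"
    using assms by (intro binomial_mult_power_le) auto
  also have "n * (2 / (c * n)) = 2 / c"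
    using assms by simp
  finally show "prob {\<omega>\<in>space M. k \<le> card {i\<in>{1..n}. c * n < X i \<omega>}} \<le> (2 / c) ^ k / fact k" .
qed

lemma expectation_truncate_power:
  assumes "1 \<le> T" "1 \<le> p"
  shows "expectation (\<lambda>\<omega>. truncate_at T (X i \<omega>) ^ p) = (\<Sum>k = 1..nat \<lfloor>log 2 T\<rfloor>. (2 ^ k) ^ p / 2 ^ k)"
proof -
  let ?K = "{1..nat \<lfloor>log 2 T\<rfloor>}"
  let ?E = "\<lambda>k. {\<omega>\<in>space M. X i \<omega> = 2 ^ k}"
  have "AE \<omega> in M. truncate_at T (X i \<omega>) ^ p = (\<Sum>k\<in>?K. (2 ^ k) ^ p * indicator (?E k) \<omega>)"
    using AE_X_power2[of i] AE_space
  proof eventually_elim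
    case (elim \<omega>)
    then obtain j where j: "1 \<le> j" "X i \<omega> = 2 ^ j"
      by blast
    have "(\<Sum>k\<in>?K. (2 ^ k) ^ p * indicator (?E k) \<omega>) = (\<Sum>k\<in>?K. if k = j then (2 ^ j) ^ p else 0::real)"
      using elim j by (intro sum.cong) (auto simp: indicator_def)
    also have "\<dots> = truncate_at T (X i \<omega>) ^ p"
      using j power2_le_iff_le_nat_floor_log[OF assms(1), of j] assms(2) by (auto simp: truncate_at_def)
    finally show ?case ..
  qed
  then have "expectation (\<lambda>\<omega>. truncate_at T (X i \<omega>) ^ p)
      = expectation (\<lambda>\<omega>. \<Sum>k\<in>?K. (2 ^ k) ^ p * indicator (?E k) \<omega>)"
    by (rule integral_cong_AE[rotated 2]) measurable
  also have "\<dots> = (\<Sum>k\<in>?K. (2 ^ k) ^ p * prob (?E k))"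
    by (subst Bochner_Integration.integral_sum) (auto simp: less_top[symmetric])
  also have "\<dots> = (\<Sum>k\<in>?K. (2 ^ k) ^ p / 2 ^ k)"
    by (intro sum.cong refl) (auto simp: X_distr)
  finally show ?thesis .
qed

lemma expectation_truncate_le:
  assumes "1 \<le> T"
  shows "expectation (\<lambda>\<omega>. truncate_at T (X i \<omega>)) \<le> log 2 T"
  using expectation_truncate_power[OF assms, of 1] assms by simp

lemma expectation_truncate_square_le:
  assumes "1 \<le> T"
  shows "expectation (\<lambda>\<omega>. truncate_at T (X i \<omega>) ^ 2) \<le> 2 * T"
proof -
  have "expectation (\<lambda>\<omega>. truncate_at T (X i \<omega>) ^ 2) = (\<Sum>k = 1..nat \<lfloor>log 2 T\<rfloor>. 2 ^ k)"
    using expectation_truncate_power[OF assms, of 2] by (simp add: power2_eq_square)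
  also have "\<dots> = 2 * 2 ^ nat \<lfloor>log 2 T\<rfloor> - 2"
    by (induction ("nat \<lfloor>log 2 T\<rfloor>") rule: nat.induct) auto
  also have "\<dots> \<le> 2 * T"
    using power2_le_iff_le_nat_floor_log[OF assms, of "nat \<lfloor>log 2 T\<rfloor>"] by simp
  finally show ?thesis .
qed

lemma prob_truncated_sum_ge_le:
  assumes "1 \<le> T" "0 \<le> l"
  shows "prob {\<omega>\<in>space M. s \<le> (\<Sum>i = 1..n. truncate_at T (X i \<omega>))}
    \<le> exp (- l * s + n * (l * log 2 T + l\<^sup>2 * T * exp (l * T)))"
proof -
  have indep: "indep_vars (\<lambda>_. borel) (\<lambda>i \<omega>. truncate_at T (X i \<omega>)) {1..n}"
    by (rule indep_vars_compose2[OF indep_vars_subset[OF X_indep]]) auto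
  have bounds: "0 \<le> truncate_at T (X i \<omega>) \<and> truncate_at T (X i \<omega>) \<le> T" for i \<omega>
    using assms truncate_at_bounds by auto
  have mgf: "expectation (\<lambda>\<omega>. exp (l * truncate_at T (X i \<omega>)))
      \<le> exp (l * log 2 T + l\<^sup>2 * T * exp (l * T))" for i
  proof -
    have "expectation (\<lambda>\<omega>. exp (l * truncate_at T (X i \<omega>)))
        \<le> exp (l * expectation (\<lambda>\<omega>. truncate_at T (X i \<omega>))
          + l\<^sup>2 / 2 * exp (l * T) * expectation (\<lambda>\<omega>. truncate_at T (X i \<omega>) ^ 2))"
      using assms bounds by (intro expectation_exp_le) auto
    also have "\<dots> \<le> exp (l * log 2 T + l\<^sup>2 / 2 * exp (l * T) * (2 * T))"
      using assms expectation_truncate_le expectation_truncate_square_le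
      by (intro exp_mono add_mono mult_left_mono) auto
    finally show ?thesis
      by (simp add: mult_ac)
  qed
  show ?thesis
    using prob_sum_ge_le_exp[OF indep finite_atLeastAtMost assms(2) bounds mgf] by simp
qed

lemma prob_truncated_sum_large_le:
  assumes "100 \<le> y" "0 < m" "m \<le> y" "1 \<le> n"
    and a: "log 2 n - log 2 m - 2 \<le> a"
  shows "prob {\<omega>\<in>space M. n * (a + y) \<le> (\<Sum>i = 1..n. truncate_at (y / m * n) (X i \<omega>))}
    \<le> exp (4 * m) * y powr - (m / 4)"
proof -
  define T where "T = y / m * n"
  define l where "l = ln y / 2 / T"
  have "1 * 1 \<le> y / m * n"
    using assms by (intro mult_mono) auto
  then have "1 \<le> T"
    by (simp add: T_def)
  have "log 2 T = log 2 y + log 2 n - log 2 m"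
    using assms by (simp add: T_def log_mult log_divide)
  then have cond: "log 2 T - a - y \<le> - y / 2"
    using log2_add_2_le_half[OF \<open>100 \<le> y\<close>] a by linarith
  have "prob {\<omega>\<in>space M. n * (a + y) \<le> (\<Sum>i = 1..n. truncate_at T (X i \<omega>))}
      \<le> exp (- l * (n * (a + y)) + n * (l * log 2 T + l\<^sup>2 * T * exp (l * T)))"
    using \<open>1 \<le> T\<close> assms by (intro prob_truncated_sum_ge_le) (auto simp: l_def)
  also have "\<dots> \<le> exp (- ln y * m / 4 + 4 * m)"
    using chernoff_exponent_le[OF \<open>100 \<le> y\<close> \<open>0 < m\<close> _ _ cond] assms by (simp add: T_def l_def)
  also have "\<dots> = exp (4 * m) * y powr - (m / 4)"
    using assms by (simp add: powr_def exp_add[symmetric] algebra_simps)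
  finally show ?thesis
    by (simp add: T_def)
qed

lemma prob_truncated_sum_exceeds_centring_le:
  fixes y :: real and r n :: nat
  defines "m \<equiv> real (4 * r + 8)"
  assumes y: "100 \<le> y" "m \<le> y" and n: "1 \<le> n"
  shows "prob {\<omega>\<in>space M. n * (a_const r n (gamma_n n) + y)
      \<le> (\<Sum>i = 1..n. truncate_at (y / m * n) (X i \<omega>))} \<le> exp (4 * m) * y powr - real (r+2)"
proof -
  have "log 2 n - log 2 (real r + 1) - 2 \<le> a_const r n (gamma_n n)"
    using n by (intro a_const_lower_bound) (auto simp: gamma_n_def)
  moreover have "log 2 (real r + 1) \<le> log 2 m"
    by (simp add: m_def)
  ultimately have "log 2 n - log 2 m - 2 \<le> a_const r n (gamma_n n)"
    by linarith
  moreover have "0 < m"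
    by (simp add: m_def)
  ultimately have "prob {\<omega>\<in>space M. n * (a_const r n (gamma_n n) + y)
      \<le> (\<Sum>i = 1..n. truncate_at (y / m * n) (X i \<omega>))} \<le> exp (4 * m) * y powr - (m / 4)"
    using y n by (intro prob_truncated_sum_large_le) auto
  also have "m / 4 = real (r + 2)"
    by (simp add: m_def)
  finally show ?thesis .
qed

lemma AE_trimmed_sum_large_cases:
  assumes "0 \<le> t\<^sub>1"
  shows "AE \<omega> in M. t\<^sub>1 + s < trimmed_sum X n r \<omega> \<longrightarrow>
    r + 1 \<le> card {i\<in>{1..n}. t\<^sub>1 < X i \<omega>} \<or> r + 2 \<le> card {i\<in>{1..n}. t\<^sub>2 < X i \<omega>} \<or>
    s \<le> (\<Sum>i = 1..n. truncate_at t\<^sub>2 (X i \<omega>))"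
  using AE_X_nonneg
proof eventually_elim
  case (elim \<omega>)
  then show ?case
    using trimmed_sum_le_truncated_sum[of n X \<omega> t\<^sub>1 r t\<^sub>2] assms by fastforce
qed

lemma prob_trimmed_sum_deviation_le:
  fixes \<delta> x :: real and r n :: nat
  defines "m \<equiv> real (4 * r + 8)"
  assumes "0 < \<delta>" "\<delta> < 1" "0 < x" "1 \<le> n" "100 \<le> \<delta> * x" "m \<le> \<delta> * x"
  shows "prob {\<omega>\<in>space M. trimmed_sum X n r \<omega> / n - a_const r n (gamma_n n) > x}
    \<le> 2 ^ (r+1) / fact (r+1) * ((1 - \<delta>) * x) powr - real (r+1)
      + ((2 * m) ^ (r+2) + exp (4 * m)) * (\<delta> * x) powr - real (r+2)"
proof -
  define y where "y = \<delta> * x"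
  define a where "a = a_const r n (gamma_n n)"
  define A where "A = {\<omega>\<in>space M. r + 1 \<le> card {i\<in>{1..n}. (1 - \<delta>) * x * n < X i \<omega>}}"
  define B where "B = {\<omega>\<in>space M. r + 2 \<le> card {i\<in>{1..n}. y / m * n < X i \<omega>}}"
  define D where "D = {\<omega>\<in>space M. n * (a + y) \<le> (\<Sum>i = 1..n. truncate_at (y / m * n) (X i \<omega>))}"
  have y: "0 < y" "100 \<le> y" "0 < m" "m \<le> y"
    using assms by (auto simp: y_def m_def)
  have events: "A \<in> events" "B \<in> events" "D \<in> events"
    using prob_many_X_greater_le(1) assms y by (auto simp: A_def B_def D_def)
  have "0 \<le> (1 - \<delta>) * x * n"
    using assms by simp
  from AE_trimmed_sum_large_cases[OF this, of "n * (a + y)" n r "y / m * n"]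
  have "AE \<omega> in M. \<omega> \<in> {\<omega>\<in>space M. trimmed_sum X n r \<omega> / n - a > x} \<longrightarrow> \<omega> \<in> A \<union> B \<union> D"
  proof eventually_elim
    case (elim \<omega>)
    then show ?case
      using assms by (auto simp: A_def B_def D_def y_def field_simps)
  qed
  then have "prob {\<omega>\<in>space M. trimmed_sum X n r \<omega> / n - a > x} \<le> prob (A \<union> B \<union> D)"
    using events by (intro finite_measure_mono_AE) auto
  also have "\<dots> \<le> prob A + prob B + prob D"
    using events measure_Un_le[of "A \<union> B" M D] measure_Un_le[of A M B] by auto
  also have "prob A \<le> 2 ^ (r+1) / fact (r+1) * ((1 - \<delta>) * x) powr - real (r+1)"
  proof -
    have "prob A \<le> (2 / ((1 - \<delta>) * x)) ^ (r+1) / fact (r+1)"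
      using prob_many_X_greater_le(2)[of "(1 - \<delta>) * x" "r + 1" n] assms by (simp add: A_def)
    also have "(2 / ((1 - \<delta>) * x)) ^ (r+1) = 2 ^ (r+1) * ((1 - \<delta>) * x) powr - real (r+1)"
      using assms by (intro divide_power_eq_mult_powr) auto
    finally show ?thesis
      by simp
  qed
  also have "prob B \<le> (2 * m) ^ (r+2) * y powr - real (r+2)"
  proof -
    have "prob B \<le> (2 * m / y) ^ (r+2) / fact (r+2)"
      using prob_many_X_greater_le(2)[of "y / m" "r + 2" n] assms y by (simp add: B_def)
    also have "\<dots> \<le> (2 * m / y) ^ (r+2)"
      using y fact_ge_1[of "r+2", where 'a = real] by (intro divide_left_mono[of 1, simplified]) auto
    also have "\<dots> = (2 * m) ^ (r+2) * y powr - real (r+2)"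
      using y by (intro divide_power_eq_mult_powr) auto
    finally show ?thesis .
  qed
  also have "prob D \<le> exp (4 * m) * y powr - real (r+2)"
    unfolding D_def a_def m_def using y assms
    by (intro prob_truncated_sum_exceeds_centring_le) (auto simp: m_def)
  finally show ?thesis
    by (simp add: a_def y_def algebra_simps)
qed

end

theorem theorem4:
  fixes M :: "'a measure" and X :: "nat \<Rightarrow> 'a \<Rightarrow> real" and r :: nat
  assumes "prob_space M"
    and "\<And>i. X i \<in> borel_measurable M"
    and "prob_space.indep_vars M (\<lambda>_. borel) X UNIV"
    and "\<And>i k. k \<ge> 1 \<Longrightarrow> measure M {\<omega> \<in> space M. X i \<omega> = 2 ^ k} = 1 / 2 ^ k"
  shows "\<exists>C>0. \<forall>\<delta> x n. 0 < \<delta> \<and> \<delta> < 1 \<and> x \<ge> exp 1 \<and> n \<ge> 1 \<longrightarrow>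
           measure M {\<omega> \<in> space M.
              trimmed_sum X n r \<omega> / real n - a_const r n (gamma_n n) > x}
           \<le> 2 ^ (r+1) / fact (r+1) * ((1 - \<delta>) * x) powr (- real (r+1))
             + C * \<delta> powr (- (real r + 3/2)) * x powr (- (real r + 3/2))"
proof -
  interpret st_petersburg M X
    using assms by (simp add: st_petersburg_def st_petersburg_axioms_def)
  define m where "m = real (4 * r + 8)"
  define L where "L = max 100 m"
  define C where "C = (2 * m) ^ (r+2) + exp (4 * m) + L powr (real r + 3/2)"
  show ?thesis
  proof (intro exI[of _ C] conjI allI impI)
    show "0 < C"
      by (simp add: C_def m_def L_def add_pos_pos)
    fix \<delta> x :: real and n :: nat
    assume "0 < \<delta> \<and> \<delta> < 1 \<and> x \<ge> exp 1 \<and> n \<ge> 1"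
    moreover have "0 < exp (1::real)"
      by simp
    ultimately have "0 < \<delta>" "\<delta> < 1" "0 < x" "1 \<le> n"
      by linarith+
    have "prob {\<omega>\<in>space M. trimmed_sum X n r \<omega> / n - a_const r n (gamma_n n) > x}
        \<le> 2 ^ (r+1) / fact (r+1) * ((1 - \<delta>) * x) powr - real (r+1)
          + C * (\<delta> * x) powr - (real r + 3/2)"
      unfolding C_def
      using prob_trimmed_sum_deviation_le[OF \<open>0 < \<delta>\<close> \<open>\<delta> < 1\<close> \<open>0 < x\<close> \<open>1 \<le> n\<close>]
      by (intro le_add_powr_extend_to_small[where a = "real (r+2)"])
        (auto simp: L_def m_def \<open>0 < \<delta>\<close> \<open>0 < x\<close>)
    then show "prob {\<omega>\<in>space M. trimmed_sum X n r \<omega> / n - a_const r n (gamma_n n) > x}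
        \<le> 2 ^ (r+1) / fact (r+1) * ((1 - \<delta>) * x) powr - real (r+1)
          + C * \<delta> powr - (real r + 3/2) * x powr - (real r + 3/2)"
      using \<open>0 < \<delta>\<close> \<open>0 < x\<close> by (simp add: powr_mult mult.assoc)
  qed
qed

end
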